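(* Let $A\in\mathbb{R}^{n\times n}$, $B\in\mathbb{R}^{n\times m}$, $C\in\mathbb{R}^{p\times n}$, and let $\overline{K},\underline{K}\in\mathbb{R}^{m\times n}$ and $\overline{L},\underline{L}\in\mathbb{R}^{n\times p}$. Consider the linear system on $\mathbb{R}^{3n}$ \[ \begin{bmatrix} x \\ \overline{x} \\ \underline{x}\end{bmatrix}(t+1) = \begin{bmatrix} A & B\overline{K} & B\underline{K} \\ \overline{L}C & A-\overline{L}C+B\overline{K} & B\underline{K} \\ \underline{L}C & B\overline{K} & A-\underline{L}C+B\underline{K} \end{bmatrix} \begin{bmatrix} x \\ \overline{x} \\ \underline{x}\end{bmatrix}(t), \] and the set \[ \mathcal{X}=\{(x,\overline{x},\underline{x}) : x,\overline{x},\underline{x}\in\mathbb{R}^n_+,\ \underline{x}\le x\le \overline{x}\}. \] Then $\mathcal{X}$ is invariant under these dynamics (i.e., every trajectory starting in $\mathcal{X}$ remains in $\mathcal{X}$ for all $t\ge 0$) if and only if all of the following hold: \[ A+B(\overline{K}+\underline{K})\ge 0,\quad A+B\overline{K}\ge0,\quad B\overline{K}\ge0,\quad A-\overline{L}C\ge0,\quad A-\underline{L}C\ge0,\quad B\overline{K}+\underline{L}C\ge0 . \]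
   Context: All inequalities between matrices or vectors are element-wise. $\mathbb{R}^n_+$ denotes the closed nonnegative orthant. This system is the closed loop of $x(t+1)=Ax(t)+Bu(t)$, $y(t)=Cx(t)$ with two Luenberger observers $\overline{x}(t+1)=(A-\overline{L}C)\overline{x}(t)+\overline{L}y(t)+Bu(t)$, $\underline{x}(t+1)=(A-\underline{L}C)\underline{x}(t)+\underline{L}y(t)+Bu(t)$ (upper and lower estimates) and feedback $u(t)=\underline{K}\,\underline{x}(t)+\overline{K}\,\overline{x}(t)$. *)

theory Defs
  imports "HOL-Analysis.Analysis"
begin

definition nonneg_mat :: "real^'c^'r \<Rightarrow> bool" where
  "nonneg_mat M \<longleftrightarrow> (\<forall>i j. 0 \<le> M $ i $ j)"

definition nonneg_vec :: "real^'n \<Rightarrow> bool" where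
  "nonneg_vec v \<longleftrightarrow> (\<forall>i. 0 \<le> v $ i)"

definition vec_le :: "real^'n \<Rightarrow> real^'n \<Rightarrow> bool" where
  "vec_le u v \<longleftrightarrow> (\<forall>i. u $ i \<le> v $ i)"

definition closed_loop ::
  "real^'n^'n \<Rightarrow> real^'m^'n \<Rightarrow> real^'n^'p \<Rightarrow> real^'n^'m \<Rightarrow> real^'n^'m
   \<Rightarrow> real^'p^'n \<Rightarrow> real^'p^'n
   \<Rightarrow> (real^'n) \<times> (real^'n) \<times> (real^'n) \<Rightarrow> (real^'n) \<times> (real^'n) \<times> (real^'n)" where
  "closed_loop A B C Kup Klo Lup Llo = (\<lambda>(x, xu, xl).
       (A *v x + (B ** Kup) *v xu + (B ** Klo) *v xl,
        (Lup ** C) *v x + (A - Lup ** C + B ** Kup) *v xu + (B ** Klo) *v xl,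
        (Llo ** C) *v x + (B ** Kup) *v xu + (A - Llo ** C + B ** Klo) *v xl))"

definition interval_set :: "((real^'n) \<times> (real^'n) \<times> (real^'n)) set" where
  "interval_set = {(x, xu, xl). nonneg_vec x \<and> nonneg_vec xu \<and> nonneg_vec xl
                      \<and> vec_le xl x \<and> vec_le x xu}"

definition forward_invariant :: "('a \<Rightarrow> 'a) \<Rightarrow> 'a set \<Rightarrow> bool" where
  "forward_invariant f S \<longleftrightarrow> (\<forall>z0\<in>S. \<forall>t::nat. (f ^^ t) z0 \<in> S)"

end

theory Submission
  imports Defs
begin

text \<open>In the coordinates \<open>a = xunder\<close>, \<open>b = x - xunder\<close>, \<open>c = xbar - x\<close> the set X becomes
  the nonnegative orthant and the closed loop becomes block upper triangular,
  \<open>a' = (A + B(Kbar + Kunder)) a + (B Kbar + Lunder C) b + B Kbar c\<close>, \<open>b' = (A - Lunder C) b\<close>,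
  \<open>c' = (A - Lbar C) c\<close>. A linear map leaves the orthant invariant iff its matrix is
  nonnegative, which yields the listed conditions; \<open>A + B Kbar \<ge> 0\<close> is the sum of two of
  the others.\<close>

lemma forward_invariant_iff: "forward_invariant f S \<longleftrightarrow> (\<forall>z\<in>S. f z \<in> S)"
proof
  assume "forward_invariant f S"
  then show "\<forall>z\<in>S. f z \<in> S"
    unfolding forward_invariant_def by (metis funpow_0 funpow_Suc_right o_apply)
next
  assume step: "\<forall>z\<in>S. f z \<in> S"
  show "forward_invariant f S"
    unfolding forward_invariant_def
  proof (intro ballI allI)
    fix z0 t
    assume "z0 \<in> S"
    then show "(f ^^ t) z0 \<in> S" using step by (induction t) auto
  qed
qed

lemma nonneg_vec_zero: "nonneg_vec 0"
  by (simp add: nonneg_vec_def)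

lemma nonneg_vec_add: "nonneg_vec u \<Longrightarrow> nonneg_vec v \<Longrightarrow> nonneg_vec (u + v)"
  unfolding nonneg_vec_def by simp

lemma nonneg_mat_add: "nonneg_mat P \<Longrightarrow> nonneg_mat Q \<Longrightarrow> nonneg_mat (P + Q)"
  unfolding nonneg_mat_def by simp

lemma nonneg_vec_matrix_vector_mult:
  "nonneg_mat P \<Longrightarrow> nonneg_vec v \<Longrightarrow> nonneg_vec (P *v v)"
  unfolding nonneg_mat_def nonneg_vec_def matrix_vector_mult_def
  by (auto intro!: sum_nonneg)

lemma matrix_vector_mult_axis_component: "(P *v axis j 1) $ i = P $ i $ j"
  by (simp add: matrix_vector_mult_def axis_def if_distrib cong: if_cong)

lemma nonneg_vec_axis: "0 \<le> c \<Longrightarrow> nonneg_vec (axis j c)"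
  by (simp add: nonneg_vec_def axis_def)

lemma nonneg_mat_iff_maps_nonneg:
  "nonneg_mat P \<longleftrightarrow> (\<forall>v. nonneg_vec v \<longrightarrow> nonneg_vec (P *v v))"
proof
  assume "\<forall>v. nonneg_vec v \<longrightarrow> nonneg_vec (P *v v)"
  then show "nonneg_mat P"
    unfolding nonneg_mat_def
    by (metis nonneg_vec_def nonneg_vec_axis zero_le_one
        matrix_vector_mult_axis_component)
qed (simp add: nonneg_vec_matrix_vector_mult)

lemma nonneg_block_row_iff:
  "(\<forall>a b c. nonneg_vec a \<longrightarrow> nonneg_vec b \<longrightarrow> nonneg_vec c \<longrightarrow>
       nonneg_vec (P *v a + Q *v b + R *v c))
   \<longleftrightarrow> nonneg_mat P \<and> nonneg_mat Q \<and> nonneg_mat R"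
  (is "?maps \<longleftrightarrow> _")
proof
  assume maps: ?maps
  have "nonneg_vec (P *v a)" if "nonneg_vec a" for a
    using maps[rule_format, OF that nonneg_vec_zero nonneg_vec_zero] by simp
  moreover have "nonneg_vec (Q *v b)" if "nonneg_vec b" for b
    using maps[rule_format, OF nonneg_vec_zero that nonneg_vec_zero] by simp
  moreover have "nonneg_vec (R *v c)" if "nonneg_vec c" for c
    using maps[rule_format, OF nonneg_vec_zero nonneg_vec_zero that] by simp
  ultimately show "nonneg_mat P \<and> nonneg_mat Q \<and> nonneg_mat R"
    by (simp add: nonneg_mat_iff_maps_nonneg)
qed (simp add: nonneg_vec_add nonneg_vec_matrix_vector_mult)

lemma interval_coordinates_mem:
  "(a + b, a + b + c, a) \<in> interval_set \<longleftrightarrow> nonneg_vec a \<and> nonneg_vec b \<and> nonneg_vec c"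
  by (auto simp: interval_set_def nonneg_vec_def vec_le_def)

lemma ball_interval_set_iff:
  "(\<forall>z\<in>interval_set. Q z) \<longleftrightarrow>
     (\<forall>a b c. nonneg_vec a \<longrightarrow> nonneg_vec b \<longrightarrow> nonneg_vec c \<longrightarrow> Q (a + b, a + b + c, a))"
proof -
  have "z = (xl + (x - xl), xl + (x - xl) + (xu - x), xl)" if "z = (x, xu, xl)"
    for z and x xu xl :: "real^'n"
    using that by simp
  then show ?thesis
    by (metis interval_coordinates_mem prod_cases3)
qed

lemma closed_loop_interval_coordinates:
  "closed_loop A B C Kup Klo Lup Llo (a + b, a + b + c, a) =
     (let xl' = (A + B ** (Kup + Klo)) *v a + (B ** Kup + Llo ** C) *v b + (B ** Kup) *v c
      in (xl' + (A - Llo ** C) *v b, xl' + (A - Llo ** C) *v b + (A - Lup ** C) *v c, xl'))"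
  by (simp add: closed_loop_def Let_def matrix_add_ldistrib algebra_simps)

theorem lemma1:
  fixes A :: "real^'n^'n" and B :: "real^'m^'n" and C :: "real^'n^'p"
    and Kup Klo :: "real^'n^'m" and Lup Llo :: "real^'p^'n"
  shows "forward_invariant (closed_loop A B C Kup Klo Lup Llo) interval_set \<longleftrightarrow>
     (nonneg_mat (A + B ** (Kup + Klo)) \<and> nonneg_mat (A + B ** Kup) \<and> nonneg_mat (B ** Kup)
      \<and> nonneg_mat (A - Lup ** C) \<and> nonneg_mat (A - Llo ** C)
      \<and> nonneg_mat (B ** Kup + Llo ** C))"
proof -
  let ?P = "A + B ** (Kup + Klo)" and ?Q = "B ** Kup + Llo ** C" and ?R = "B ** Kup"
  let ?D = "A - Llo ** C" and ?E = "A - Lup ** C"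
  have "forward_invariant (closed_loop A B C Kup Klo Lup Llo) interval_set \<longleftrightarrow>
      (\<forall>a b c. nonneg_vec a \<longrightarrow> nonneg_vec b \<longrightarrow> nonneg_vec c \<longrightarrow>
         nonneg_vec (?P *v a + ?Q *v b + ?R *v c) \<and> nonneg_vec (?D *v b) \<and> nonneg_vec (?E *v c))"
    unfolding forward_invariant_iff ball_interval_set_iff closed_loop_interval_coordinates
      Let_def interval_coordinates_mem ..
  also have "\<dots> \<longleftrightarrow>
      (\<forall>a b c. nonneg_vec a \<longrightarrow> nonneg_vec b \<longrightarrow> nonneg_vec c \<longrightarrow>
         nonneg_vec (?P *v a + ?Q *v b + ?R *v c))
      \<and> (\<forall>v. nonneg_vec v \<longrightarrow> nonneg_vec (?D *v v))
      \<and> (\<forall>v. nonneg_vec v \<longrightarrow> nonneg_vec (?E *v v))"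
    using nonneg_vec_zero by meson
  also have "\<dots> \<longleftrightarrow> nonneg_mat ?P \<and> nonneg_mat ?Q \<and> nonneg_mat ?R \<and> nonneg_mat ?D \<and> nonneg_mat ?E"
    unfolding nonneg_block_row_iff nonneg_mat_iff_maps_nonneg by simp
  also have "\<dots> \<longleftrightarrow> nonneg_mat ?P \<and> nonneg_mat (A + ?R) \<and> nonneg_mat ?R \<and> nonneg_mat ?E
      \<and> nonneg_mat ?D \<and> nonneg_mat ?Q"
  proof -
    have "A + ?R = ?D + ?Q" by simp
    then show ?thesis using nonneg_mat_add[of ?D ?Q] by auto
  qed
  finally show ?thesis .
qed

end
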